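(* Let $d\ge2$, $\xi>0$, let $\sigma:\xi\mathbb{Z}^d\to\mathbb{R}$ be a generalized mass configuration and let $R_1>0$ be such that $\operatorname{supp}\sigma\subset\hat B_{R_1}$. Then for every $R_2>R_1+\xi$, $$\operatorname{GDS}_{R_2}(\operatorname{GDS}_{R_1}(\sigma))=\operatorname{GDS}_{R_2}(\sigma).$$
   Context: A generalized mass configuration on $\xi\mathbb{Z}^d$ is a bounded function with finite support. $\hat B_R:=B(0,R)\cap\xi\mathbb{Z}^d$. Neighbours $y'\sim y$ are lattice points at distance $\xi$; $\Delta f(y)=\frac{1}{2d\xi^2}\sum_{y'\sim y}(f(y')-f(y))$; toppling at $x$ is $T_x\eta(y):=\eta(y)+\eta_+(x)\xi^2\Delta\delta_x(y)$ (if $\eta(x)>0$, remove the mass $\eta(x)$ from $x$ and add $\eta(x)/(2d)$ to each neighbour; otherwise do nothing). For a generalized mass configuration $\tau$ with $\operatorname{supp}\tau\subset\hat B_R$, $\operatorname{GDS}_R(\tau)$ is the pointwise limit of the configurations obtained from $\tau$ by successively toppling at the points of a sequence in $\hat B_R$ in which every point of $\hat B_R$ occurs infinitely often; this limit exists, does not depend on the sequence, is supported in $\hat B_R\cup\partial\hat B_R$ (where $\partial S=\{y\notin S:\exists y'\in S,\ y\sim y'\}$), and equals $-\Delta v$ where $v(x)=\sup\{f(x):\Delta f\ge0\text{ in }\hat B_R,\ f\le U^\tau\text{ in }\xi\mathbb{Z}^d\}$, $U^\tau$ being the discrete potential of $\tau$ (satisfying $-\Delta U^\tau=\tau$). *)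

theory Defs
  imports "HOL-Analysis.Analysis" "HOL-Library.Infinite_Set"
begin

text \<open>Lattice \<xi>Z^d: a lattice point is represented by its integer coordinate vector
  z :: int^'d, standing for the point \<xi> z in R^d. The dimension is d = CARD('d).\<close>

definition emb :: "real \<Rightarrow> int^'d \<Rightarrow> real^'d" where
  "emb \<xi> z = \<xi> *\<^sub>R (\<chi> i. real_of_int (z $ i))"

definition gen_mass_config :: "(int^'d \<Rightarrow> real) \<Rightarrow> bool" where
  "gen_mass_config \<eta> \<longleftrightarrow> bdd_above (range (\<lambda>z. \<bar>\<eta> z\<bar>)) \<and> finite {z. \<eta> z \<noteq> 0}"

definition supp :: "(int^'d \<Rightarrow> real) \<Rightarrow> (int^'d) set" where
  "supp \<eta> = {z. \<eta> z \<noteq> 0}"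

definition Bhat :: "real \<Rightarrow> real \<Rightarrow> (int^'d) set" where
  "Bhat \<xi> R = {z. emb \<xi> z \<in> ball 0 R}"

definition nbr :: "real \<Rightarrow> int^'d \<Rightarrow> int^'d \<Rightarrow> bool" where
  "nbr \<xi> y' y \<longleftrightarrow> dist (emb \<xi> y') (emb \<xi> y) = \<xi>"

definition lap :: "real \<Rightarrow> (int^'d \<Rightarrow> real) \<Rightarrow> int^'d \<Rightarrow> real" where
  "lap \<xi> f y = (1 / (2 * real CARD('d) * \<xi>\<^sup>2)) * (\<Sum>y'\<in>{y'. nbr \<xi> y' y}. (f y' - f y))"

definition topple :: "real \<Rightarrow> int^'d \<Rightarrow> (int^'d \<Rightarrow> real) \<Rightarrow> (int^'d \<Rightarrow> real)" where
  "topple \<xi> x \<eta> = (\<lambda>y. \<eta> y + max (\<eta> x) 0 * \<xi>\<^sup>2 * lap \<xi> (\<lambda>w. if w = x then 1 else 0) y)"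

primrec topple_seq :: "real \<Rightarrow> (nat \<Rightarrow> int^'d) \<Rightarrow> nat \<Rightarrow> (int^'d \<Rightarrow> real) \<Rightarrow> (int^'d \<Rightarrow> real)" where
  "topple_seq \<xi> s 0 \<eta> = \<eta>"
| "topple_seq \<xi> s (Suc n) \<eta> = topple \<xi> (s n) (topple_seq \<xi> s n \<eta>)"

definition admissible_seq :: "real \<Rightarrow> real \<Rightarrow> (nat \<Rightarrow> int^'d) \<Rightarrow> bool" where
  "admissible_seq \<xi> R s \<longleftrightarrow> (\<forall>n. s n \<in> Bhat \<xi> R) \<and> (\<forall>x\<in>Bhat \<xi> R. \<exists>\<^sub>\<infinity>n. s n = x)"

text \<open>GDS_R(\<tau>): the pointwise limit of the toppling configurations along any admissible
  sequence (which exists and is independent of the sequence).\<close>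
definition GDS :: "real \<Rightarrow> real \<Rightarrow> (int^'d \<Rightarrow> real) \<Rightarrow> (int^'d \<Rightarrow> real)" where
  "GDS \<xi> R \<tau> = (THE \<omega>. \<forall>s. admissible_seq \<xi> R s \<longrightarrow>
        (\<forall>y. (\<lambda>n. topple_seq \<xi> s n \<tau> y) \<longlonglongrightarrow> \<omega> y))"

end

theory Submission
  imports Defs
begin

text \<open>After finitely many topplings the configuration is tau + xi^2 Delta u, where the
  odometer u(x) is the mass emitted from x so far. Along an admissible sequence u increases,
  bounded by an explicit quadratic supersolution, to a limit that is nonnegative, vanishes off the
  ball, and satisfies tau + xi^2 Delta u <= 0 on the ball with equality where u > 0. By a maximum
  principle on the finite ball these conditions determine u, so GDS_R(tau) = tau + xi^2 Delta u for
  the unique such u. If u1 is this odometer for sigma on the ball of radius R1 and u2 the one for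
  GDS_R1(sigma) on the ball of radius R2, then u1 + u2 satisfies the conditions for sigma on the
  larger ball: at a site with u2 = 0 < u1, GDS_R1(sigma) vanishes and xi^2 Delta u2 >= 0 since u2
  attains its minimum 0 there. Only the inclusion of the balls is used.\<close>

definition unit_vec :: "'d \<Rightarrow> bool \<Rightarrow> int^'d" where
  "unit_vec i b = (\<chi> j. if j = i then (if b then 1 else -1) else 0)"

definition int_sqnorm :: "int^'d \<Rightarrow> int" where
  "int_sqnorm z = (\<Sum>i\<in>UNIV. (z$i)^2)"

lemma nbr_iff_int_sqnorm:
  assumes "\<xi> > 0"
  shows "nbr \<xi> y' y \<longleftrightarrow> int_sqnorm (y' - y) = 1"
proof -
  have "emb \<xi> y' - emb \<xi> y = \<xi> *\<^sub>R (\<chi> i. real_of_int ((y' - y)$i))"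
    unfolding emb_def by (simp add: vec_eq_iff algebra_simps)
  hence "dist (emb \<xi> y') (emb \<xi> y) = \<xi> * norm (\<chi> i. real_of_int ((y' - y)$i))"
    using assms by (simp add: dist_norm)
  also have "norm (\<chi> i. real_of_int ((y' - y)$i)) = sqrt (of_int (int_sqnorm (y' - y)))"
    unfolding norm_vec_def L2_set_def int_sqnorm_def by simp
  finally show ?thesis
    unfolding nbr_def using assms by simp
qed

lemma int_sqnorm_unit_vec: "int_sqnorm (unit_vec i b) = 1"
proof -
  have "(unit_vec i b $ j)^2 = (if j = i then 1 else 0)" for j
    by (simp add: unit_vec_def)
  thus ?thesis unfolding int_sqnorm_def by simp
qed

lemma int_sqnorm_eq_1_imp_unit_vec:
  assumes "int_sqnorm z = 1"
  obtains i b where "z = unit_vec i b"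
proof -
  have "z \<noteq> 0"
    using assms by (auto simp: int_sqnorm_def)
  then obtain i where i: "z$i \<noteq> 0"
    by (auto simp: vec_eq_iff)
  have split: "int_sqnorm z = (z$i)^2 + (\<Sum>j\<in>UNIV-{i}. (z$j)^2)"
    unfolding int_sqnorm_def by (simp add: sum.remove)
  have "(z$i)^2 \<ge> 1"
    using i by (simp add: int_one_le_iff_zero_less)
  moreover have "(\<Sum>j\<in>UNIV-{i}. (z$j)^2) \<ge> 0"
    by (simp add: sum_nonneg)
  ultimately have zi: "(z$i)^2 = 1" and rest: "(\<Sum>j\<in>UNIV-{i}. (z$j)^2) = 0"
    using assms split by linarith+
  have others: "z$j = 0" if "j \<noteq> i" for j
    using rest that by (subst (asm) sum_nonneg_eq_0_iff) auto
  have "z$i = 1 \<or> z$i = -1"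
    using zi by (simp add: power2_eq_1_iff)
  hence "z = unit_vec i (z$i = 1)"
    using others by (auto simp: unit_vec_def vec_eq_iff)
  thus thesis by (rule that)
qed

lemma inj_unit_vec: "inj (\<lambda>(i, b). unit_vec i b :: int^'d)"
proof (rule injI, clarsimp)
  fix i j :: 'd and b c :: bool
  assume eq: "unit_vec i b = unit_vec j c"
  hence "unit_vec i b $ i = unit_vec j c $ i" by simp
  hence "i = j" by (auto simp: unit_vec_def split: if_splits)
  moreover from eq have "unit_vec i b $ i = unit_vec i c $ i" using \<open>i = j\<close> by simp
  ultimately show "i = j \<and> b = c" by (auto simp: unit_vec_def split: if_splits)
qed

lemma nbrs_eq_image_unit_vec:
  assumes "\<xi> > 0"
  shows "{y'. nbr \<xi> y' y} = (\<lambda>(i, b). y + unit_vec i b) ` UNIV"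
proof (intro set_eqI iffI)
  fix x assume "x \<in> {y'. nbr \<xi> y' y}"
  then obtain i b where "x - y = unit_vec i b"
    using int_sqnorm_eq_1_imp_unit_vec nbr_iff_int_sqnorm[OF assms] by blast
  thus "x \<in> (\<lambda>(i, b). y + unit_vec i b) ` UNIV"
    by (auto intro!: image_eqI[of _ _ "(i, b)"] simp: algebra_simps)
qed (auto simp: nbr_iff_int_sqnorm[OF assms] int_sqnorm_unit_vec)

lemma sum_nbrs_eq_sum_unit_vec:
  assumes "\<xi> > 0"
  shows "(\<Sum>y'\<in>{y'. nbr \<xi> y' y}. g y') = (\<Sum>(i, b)\<in>UNIV. g ((y::int^'d) + unit_vec i b))"
proof -
  have "inj (\<lambda>(i, b). y + unit_vec i b :: int^'d)"
    using inj_unit_vec unfolding inj_def by auto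
  thus ?thesis
    unfolding nbrs_eq_image_unit_vec[OF assms] by (simp add: sum.reindex case_prod_beta')
qed

lemma finite_nbrs: "\<xi> > 0 \<Longrightarrow> finite {y'. nbr \<xi> y' (y::int^'d)}"
  by (simp add: nbrs_eq_image_unit_vec)

lemma card_nbrs: "\<xi> > 0 \<Longrightarrow> card {y'. nbr \<xi> y' (y::int^'d)} = 2 * CARD('d)"
  using sum_nbrs_eq_sum_unit_vec[of \<xi> "\<lambda>_. 1::nat" y] by (simp add: card_UNIV_bool)

lemma nbr_add_unit_vec: "\<xi> > 0 \<Longrightarrow> nbr \<xi> (x + unit_vec i b) x"
  by (simp add: nbr_iff_int_sqnorm int_sqnorm_unit_vec)

lemma finite_Bhat:
  assumes "\<xi> > 0"
  shows "finite (Bhat \<xi> R :: (int^'d) set)"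
proof -
  define K where "K = \<lceil>R / \<xi>\<rceil>"
  have "z$i \<in> {-K..K}" if "z \<in> Bhat \<xi> R" for z :: "int^'d" and i
  proof -
    have "\<xi> * \<bar>real_of_int (z$i)\<bar> = \<bar>emb \<xi> z $ i\<bar>"
      using assms by (simp add: emb_def abs_mult)
    also have "\<dots> \<le> norm (emb \<xi> z)" by (rule component_le_norm_cart)
    also have "\<dots> < R" using that by (simp add: Bhat_def)
    finally have "\<bar>real_of_int (z$i)\<bar> < R / \<xi>"
      using assms by (simp add: field_simps)
    hence "\<bar>real_of_int (z$i)\<bar> \<le> real_of_int K"
      unfolding K_def by (meson le_of_int_ceiling less_le_not_le order_trans)
    hence "\<bar>z$i\<bar> \<le> K" by linarith
    thus ?thesis by (simp add: abs_le_iff)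
  qed
  hence "Bhat \<xi> R \<subseteq> (\<lambda>f. \<chi> i. f i) ` (PiE UNIV (\<lambda>_::'d. {-K..K}))"
    by (auto intro!: image_eqI[of _ _ "\<lambda>i. _ $ i"])
  thus ?thesis
    by (rule finite_subset) (intro finite_imageI finite_PiE; simp)
qed

lemma zero_in_Bhat: "R > 0 \<Longrightarrow> 0 \<in> (Bhat \<xi> R :: (int^'d) set)"
  by (simp add: Bhat_def emb_def vec_eq_iff flip: zero_vec_def)

definition scaled_lap :: "real \<Rightarrow> (int^'d \<Rightarrow> real) \<Rightarrow> int^'d \<Rightarrow> real" where
  "scaled_lap \<xi> f y = \<xi>\<^sup>2 * lap \<xi> f y"

lemma scaled_lap_eq_mean_minus:
  assumes "\<xi> > 0"
  shows "scaled_lap \<xi> f y =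
    (\<Sum>y'\<in>{y'. nbr \<xi> y' y}. f y') / (2 * real CARD('d)) - f (y::int^'d)"
  unfolding scaled_lap_def lap_def using assms card_nbrs[OF assms, of y]
  by (simp add: sum_subtractf field_simps)

lemma scaled_lap_add_scaled:
  "scaled_lap \<xi> (\<lambda>w. f w + c * g w) y = scaled_lap \<xi> f y + c * scaled_lap \<xi> g y"
  unfolding scaled_lap_def lap_def
  by (simp add: sum.distrib sum_distrib_left sum_subtractf algebra_simps)

lemma scaled_lap_add: "scaled_lap \<xi> (\<lambda>w. f w + g w) y = scaled_lap \<xi> f y + scaled_lap \<xi> g y"
  using scaled_lap_add_scaled[of \<xi> f 1 g y] by simp

lemma scaled_lap_diff: "scaled_lap \<xi> (\<lambda>w. f w - g w) y = scaled_lap \<xi> f y - scaled_lap \<xi> g y"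
  using scaled_lap_add_scaled[of \<xi> f "-1" g y] by simp

lemma scaled_lap_nonneg_at_min:
  assumes "\<xi> > 0" "\<And>y'. f y \<le> f y'"
  shows "scaled_lap \<xi> f y \<ge> 0"
  unfolding scaled_lap_def lap_def using assms by (intro mult_nonneg_nonneg sum_nonneg) auto

lemma scaled_lap_nonneg_at_max_imp_const:
  assumes "\<xi> > 0" "scaled_lap \<xi> f x \<ge> 0" "\<And>y. f y \<le> f (x::int^'d)" "nbr \<xi> y' x"
  shows "f y' = f x"
proof -
  have "scaled_lap \<xi> f x = (\<Sum>y'\<in>{y'. nbr \<xi> y' x}. f y' - f x) / (2 * real CARD('d))"
    unfolding scaled_lap_def lap_def using assms(1) by simp
  hence "(\<Sum>y'\<in>{y'. nbr \<xi> y' x}. f x - f y') \<le> 0"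
    using assms(2) by (simp add: zero_le_divide_iff sum_subtractf)
  moreover have "\<forall>y'\<in>{y'. nbr \<xi> y' x}. f x - f y' \<ge> 0"
    using assms(3) by simp
  ultimately have "(\<Sum>y'\<in>{y'. nbr \<xi> y' x}. f x - f y') = 0"
    by (meson order_antisym sum_nonneg)
  hence "\<forall>y'\<in>{y'. nbr \<xi> y' x}. f x - f y' = 0"
    using finite_nbrs[OF assms(1)] assms(3) by (subst (asm) sum_nonneg_eq_0_iff) auto
  thus ?thesis using assms(4) by simp
qed

lemma scaled_lap_delta:
  assumes "\<xi> > 0"
  shows "scaled_lap \<xi> (\<lambda>w. if w = x then 1 else 0) x = -1"
    and "y \<noteq> x \<Longrightarrow> scaled_lap \<xi> (\<lambda>w. if w = x then 1 else 0) y \<ge> 0"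
proof -
  have "\<not> nbr \<xi> x x"
    using assms by (simp add: nbr_iff_int_sqnorm int_sqnorm_def)
  hence "(\<Sum>y'\<in>{y'. nbr \<xi> y' x}. (if y' = x then 1 else 0::real)) = 0"
    by (intro sum.neutral) auto
  thus "scaled_lap \<xi> (\<lambda>w. if w = x then 1 else 0) x = -1"
    unfolding scaled_lap_eq_mean_minus[OF assms] by simp
  show "y \<noteq> x \<Longrightarrow> scaled_lap \<xi> (\<lambda>w. if w = x then 1 else 0) y \<ge> 0"
    by (rule scaled_lap_nonneg_at_min[OF assms]) auto
qed

lemma topple_at_site:
  assumes "\<xi> > 0"
  shows "topple \<xi> x \<eta> x = \<eta> x - max (\<eta> x) 0"
  using scaled_lap_delta(1)[OF assms, of x] unfolding topple_def scaled_lap_def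
  by (simp add: mult.assoc)

lemma topple_ge_off_site:
  assumes "\<xi> > 0" "y \<noteq> x"
  shows "topple \<xi> x \<eta> y \<ge> \<eta> y"
  using scaled_lap_delta(2)[OF assms] unfolding topple_def scaled_lap_def
  by (simp add: mult.assoc)

lemma sum_nbrs_coord_sq:
  assumes "\<xi> > 0"
  shows "(\<Sum>y'\<in>{y'. nbr \<xi> y' y}. real_of_int ((y'$k)^2))
    = 2 * real CARD('d) * real_of_int (((y::int^'d)$k)^2) + 2"
proof -
  have "(\<Sum>b\<in>UNIV. real_of_int (((y + unit_vec i b)$k)^2))
      = 2 * real_of_int ((y$k)^2) + (if i = k then 2 else 0)" for i
    by (cases "i = k") (simp_all add: unit_vec_def UNIV_bool power2_eq_square algebra_simps)
  thus ?thesis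
    unfolding sum_nbrs_eq_sum_unit_vec[OF assms] UNIV_Times_UNIV[symmetric]
      sum.cartesian_product[symmetric]
    by (simp add: sum.distrib)
qed

section \<open>Stable odometers and the maximum principle\<close>

text \<open>The conditions characterising the odometer u of the divisible sandpile on A started
  from \<tau>; the stabilised configuration is then \<tau> + scaled_lap \<xi> u.\<close>

definition stable_odometer ::
    "real \<Rightarrow> (int^'d) set \<Rightarrow> (int^'d \<Rightarrow> real) \<Rightarrow> (int^'d \<Rightarrow> real) \<Rightarrow> bool" where
  "stable_odometer \<xi> A \<tau> u \<longleftrightarrow> (\<forall>y. u y \<ge> 0) \<and> (\<forall>y. y \<notin> A \<longrightarrow> u y = 0) \<and>
     (\<forall>y\<in>A. \<tau> y + scaled_lap \<xi> u y \<le> 0) \<and> (\<forall>y. u y > 0 \<longrightarrow> \<tau> y + scaled_lap \<xi> u y = 0)"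

lemma stable_odometer_le:
  assumes xi: "\<xi> > 0" and fin: "finite A"
    and u: "stable_odometer \<xi> A \<tau> u" and v: "stable_odometer \<xi> A \<tau> v"
  shows "u (y::int^'d) \<le> v y"
proof (rule ccontr)
  assume "\<not> u y \<le> v y"
  hence yA: "y \<in> A" and pos: "u y - v y > 0"
    using u v unfolding stable_odometer_def by force+
  define w where "w = (\<lambda>z. u z - v z)"
  define m where "m = Max (w ` A)"
  have w_out: "\<And>z. z \<notin> A \<Longrightarrow> w z = 0"
    using u v unfolding stable_odometer_def w_def by auto
  have "w y \<le> m" unfolding m_def using fin yA by auto
  hence m_pos: "m > 0" using pos w_def by simp
  have w_le: "w z \<le> m" for z
    using fin w_out m_pos unfolding m_def by (cases "z \<in> A") auto
  text \<open>Among the maximisers of w take one with largest i0-coordinate. There u > 0, hence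
    scaled_lap w >= 0, which forces its neighbour in direction i0 to be a maximiser too.\<close>
  define T where "T = {z\<in>A. w z = m}"
  define i0 where "i0 = (undefined::'d)"
  have "m \<in> w ` A" unfolding m_def using fin yA by (intro Max_in) auto
  hence "T \<noteq> {}" "finite T" unfolding T_def using fin by auto
  hence "Max ((\<lambda>z. z$i0) ` T) \<in> (\<lambda>z. z$i0) ` T" by (intro Max_in) auto
  then obtain x where xT: "x \<in> T" and "x$i0 = Max ((\<lambda>z. z$i0) ` T)" by auto
  hence x_max: "z$i0 \<le> x$i0" if "z \<in> T" for z
    using \<open>finite T\<close> that by simp
  have xA: "x \<in> A" and wx: "w x = m" using xT T_def by auto
  moreover have "v x \<ge> 0" using v unfolding stable_odometer_def by blast
  ultimately have "u x > 0" using m_pos unfolding w_def by linarith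
  hence "\<tau> x + scaled_lap \<xi> u x = 0" and "\<tau> x + scaled_lap \<xi> v x \<le> 0"
    using u v xA unfolding stable_odometer_def by blast+
  hence "scaled_lap \<xi> w x \<ge> 0" unfolding w_def scaled_lap_diff by linarith
  hence "w (x + unit_vec i0 True) = w x"
    using w_le wx by (intro scaled_lap_nonneg_at_max_imp_const[OF xi _ _ nbr_add_unit_vec[OF xi]])
      simp_all
  hence "w (x + unit_vec i0 True) = m" using wx by simp
  hence "x + unit_vec i0 True \<in> T"
    unfolding T_def using w_out m_pos by force
  thus False using x_max by (fastforce simp: unit_vec_def)
qed

lemma stable_odometer_unique:
  assumes "\<xi> > 0" "finite A" "stable_odometer \<xi> A \<tau> u" "stable_odometer \<xi> A \<tau> v"
  shows "u = v"
  using stable_odometer_le[OF assms] stable_odometer_le[OF assms(1,2,4,3)] by (intro ext antisym)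

lemma stable_odometer_add:
  assumes xi: "\<xi> > 0" and sub: "A\<^sub>1 \<subseteq> A\<^sub>2"
    and u\<^sub>1: "stable_odometer \<xi> A\<^sub>1 \<sigma> u\<^sub>1"
    and u\<^sub>2: "stable_odometer \<xi> A\<^sub>2 (\<lambda>y. \<sigma> y + scaled_lap \<xi> u\<^sub>1 y) u\<^sub>2"
  shows "stable_odometer \<xi> A\<^sub>2 \<sigma> (\<lambda>y. u\<^sub>1 y + u\<^sub>2 y)"
  unfolding stable_odometer_def scaled_lap_add add.assoc[symmetric]
proof (intro conjI allI impI ballI)
  fix y
  show "u\<^sub>1 y + u\<^sub>2 y \<ge> 0" using u\<^sub>1 u\<^sub>2 unfolding stable_odometer_def by (simp add: add_nonneg_nonneg)
  show "y \<notin> A\<^sub>2 \<Longrightarrow> u\<^sub>1 y + u\<^sub>2 y = 0" using u\<^sub>1 u\<^sub>2 sub unfolding stable_odometer_def by auto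
  show "y \<in> A\<^sub>2 \<Longrightarrow> \<sigma> y + scaled_lap \<xi> u\<^sub>1 y + scaled_lap \<xi> u\<^sub>2 y \<le> 0"
    using u\<^sub>2 unfolding stable_odometer_def by blast
next
  fix y assume pos: "u\<^sub>1 y + u\<^sub>2 y > 0"
  show "\<sigma> y + scaled_lap \<xi> u\<^sub>1 y + scaled_lap \<xi> u\<^sub>2 y = 0"
  proof (cases "u\<^sub>2 y > 0")
    case True thus ?thesis using u\<^sub>2 unfolding stable_odometer_def by blast
  next
    case False
    hence "u\<^sub>2 y = 0" using u\<^sub>2 unfolding stable_odometer_def by (meson not_less order_antisym)
    hence "u\<^sub>1 y > 0" using pos by simp
    hence "y \<in> A\<^sub>2" and "\<sigma> y + scaled_lap \<xi> u\<^sub>1 y = 0"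
      using u\<^sub>1 sub unfolding stable_odometer_def by force+
    moreover have "scaled_lap \<xi> u\<^sub>2 y \<ge> 0"
      using \<open>u\<^sub>2 y = 0\<close> u\<^sub>2 unfolding stable_odometer_def by (intro scaled_lap_nonneg_at_min[OF xi]) auto
    ultimately show ?thesis using u\<^sub>2 unfolding stable_odometer_def by fastforce
  qed
qed

section \<open>Convergence of toppling sequences\<close>

primrec odometer :: "real \<Rightarrow> (nat \<Rightarrow> int^'d) \<Rightarrow> (int^'d \<Rightarrow> real) \<Rightarrow> nat \<Rightarrow> int^'d \<Rightarrow> real"
where
  "odometer \<xi> s \<tau> 0 = (\<lambda>_. 0)"
| "odometer \<xi> s \<tau> (Suc n) = (\<lambda>y. odometer \<xi> s \<tau> n y +
      max (topple_seq \<xi> s n \<tau> (s n)) 0 * (if y = s n then 1 else 0))"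

lemma topple_seq_eq_odometer:
  "topple_seq \<xi> s n \<tau> y = \<tau> y + scaled_lap \<xi> (odometer \<xi> s \<tau> n) y"
proof (induction n arbitrary: y)
  case 0 show ?case by (simp add: scaled_lap_def lap_def)
next
  case (Suc n) show ?case
    unfolding topple_seq.simps odometer.simps scaled_lap_add_scaled topple_def Suc
    by (simp add: scaled_lap_def algebra_simps)
qed

lemma odometer_nonneg: "odometer \<xi> s \<tau> n y \<ge> 0"
  by (induction n) auto

lemma incseq_odometer: "incseq (\<lambda>n. odometer \<xi> s \<tau> n y)"
  by (rule incseq_SucI) simp

lemma odometer_outside: "(\<And>n. s n \<in> A) \<Longrightarrow> y \<notin> A \<Longrightarrow> odometer \<xi> s \<tau> n y = 0"
  by (induction n) auto

lemma topple_seq_nonneg_if_toppled: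
  assumes xi: "\<xi> > 0"
  shows "odometer \<xi> s \<tau> n y > 0 \<Longrightarrow> topple_seq \<xi> s n \<tau> y \<ge> 0"
proof (induction n)
  case (Suc n)
  show ?case
  proof (cases "y = s n")
    case True
    have "odometer \<xi> s \<tau> n y > 0 \<or> topple_seq \<xi> s n \<tau> y > 0"
      using Suc.prems True odometer_nonneg[of \<xi> s \<tau> n y] by (auto simp: max_def split: if_splits)
    moreover have "topple_seq \<xi> s (Suc n) \<tau> y = topple_seq \<xi> s n \<tau> y - max (topple_seq \<xi> s n \<tau> y) 0"
      using topple_at_site[OF xi] True by simp
    ultimately show ?thesis using Suc.IH by auto
  next
    case False
    thus ?thesis using Suc topple_ge_off_site[OF xi False] by (simp add: order.trans)
  qed
qed simp

lemma odometer_le_supersolution: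
  assumes xi: "\<xi> > 0" and sA: "\<And>n. s n \<in> A"
    and super: "\<forall>y\<in>A. \<tau> y + scaled_lap \<xi> v y \<le> 0"
    and nonneg: "\<forall>y\<in>A. \<forall>y'. y' = y \<or> nbr \<xi> y' y \<longrightarrow> v y' \<ge> 0"
  shows "\<forall>y\<in>A. odometer \<xi> s \<tau> n (y::int^'d) \<le> v y"
proof (induction n)
  case 0 thus ?case using nonneg by simp
next
  case (Suc n)
  let ?u = "odometer \<xi> s \<tau> n" and ?N = "\<lambda>y. {y'. nbr \<xi> y' y}" and ?c = "2 * real CARD('d)"
  have nbrs: "(\<Sum>y'\<in>?N y. ?u y') \<le> (\<Sum>y'\<in>?N y. v y')" if "y \<in> A" for y
    using Suc that nonneg odometer_outside[where s=s, OF sA] by (intro sum_mono) (metis mem_Collect_eq)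
  have "odometer \<xi> s \<tau> (Suc n) y \<le> v y" if yA: "y \<in> A" and y: "y = s n" for y
  proof -
    have "odometer \<xi> s \<tau> (Suc n) y = max (\<tau> y + (\<Sum>y'\<in>?N y. ?u y') / ?c) (?u y)"
      using y topple_seq_eq_odometer[of \<xi> s n \<tau> y] unfolding scaled_lap_eq_mean_minus[OF xi]
      by (simp add: max_def)
    also have "\<dots> \<le> v y"
    proof (rule max.boundedI)
      have "(\<Sum>y'\<in>?N y. ?u y') / ?c \<le> (\<Sum>y'\<in>?N y. v y') / ?c"
        using nbrs[OF yA] by (simp add: divide_right_mono)
      moreover have "\<tau> y + ((\<Sum>y'\<in>?N y. v y') / ?c - v y) \<le> 0"
        using super yA unfolding scaled_lap_eq_mean_minus[OF xi] by blast
      ultimately show "\<tau> y + (\<Sum>y'\<in>?N y. ?u y') / ?c \<le> v y" by linarith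
      show "?u y \<le> v y" using Suc yA by blast
    qed
    finally show ?thesis .
  qed
  thus ?case using Suc by auto
qed

lemma exists_nonneg_supersolution:
  assumes xi: "\<xi> > 0" and fin: "finite (A :: (int^'d) set)"
  shows "\<exists>v. (\<forall>y\<in>A. \<tau> y + scaled_lap \<xi> v y \<le> 0) \<and>
             (\<forall>y\<in>A. \<forall>y'. y' = y \<or> nbr \<xi> y' y \<longrightarrow> v y' \<ge> 0)"
proof -
  define i0 where "i0 = (undefined::'d)"
  define d where "d = real CARD('d)"
  define M where "M = d * (\<Sum>y\<in>A. \<bar>\<tau> y\<bar>)"
  define K where "K = (\<Sum>z\<in>A. (real_of_int \<bar>z$i0\<bar> + 1)^2)"
  text \<open>Since scaled_lap maps z |-> z_i0^2 to the constant 1/d, scaled_lap v = - M/d, which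
    dominates -tau on A; K makes v nonnegative on A and its neighbours.\<close>
  define v where "v = (\<lambda>z::int^'d. M * (K - real_of_int ((z$i0)^2)))"
  have d: "d \<ge> 1" unfolding d_def by (simp add: Suc_leI)
  have M: "M \<ge> 0" unfolding M_def using d by (simp add: sum_nonneg)
  have "\<tau> y + scaled_lap \<xi> v y \<le> 0" if "y \<in> A" for y
  proof -
    have "scaled_lap \<xi> v y = - M / d"
      unfolding scaled_lap_eq_mean_minus[OF xi] v_def
      using sum_nbrs_coord_sq[OF xi, where y=y and k=i0] card_nbrs[OF xi, of y] d
      by (simp add: sum_distrib_left[symmetric] sum_subtractf d_def field_simps)
    moreover have "\<tau> y \<le> (\<Sum>y\<in>A. \<bar>\<tau> y\<bar>)"
      using fin that by (meson abs_ge_self abs_ge_zero member_le_sum order_trans)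
    ultimately show ?thesis unfolding M_def using d by simp
  qed
  moreover have "v y' \<ge> 0" if yA: "y \<in> A" and y': "y' = y \<or> nbr \<xi> y' y" for y y'
  proof -
    have "y' = y \<or> y' \<in> (\<lambda>(i, b). y + unit_vec i b) ` UNIV"
      using y' nbrs_eq_image_unit_vec[OF xi, of y] by blast
    then obtain i b where "y' = y \<or> y' = y + unit_vec i b" by auto
    hence "real_of_int \<bar>y'$i0\<bar> \<le> real_of_int \<bar>y$i0\<bar> + 1"
      by (auto simp: unit_vec_def)
    hence "real_of_int ((y'$i0)^2) \<le> (real_of_int \<bar>y$i0\<bar> + 1)^2"
      by (metis abs_ge_zero of_int_abs of_int_power power2_abs power_mono)
    also have "\<dots> \<le> K" unfolding K_def using fin yA by (intro member_le_sum) auto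
    finally show ?thesis unfolding v_def using M by simp
  qed
  ultimately show ?thesis by blast
qed

lemma topple_seq_tendsto:
  assumes "\<xi> > 0" and "\<And>y. (\<lambda>n. odometer \<xi> s \<tau> n y) \<longlonglongrightarrow> u y"
  shows "(\<lambda>n. topple_seq \<xi> s n \<tau> y) \<longlonglongrightarrow> \<tau> y + scaled_lap \<xi> u (y::int^'d)"
  unfolding topple_seq_eq_odometer scaled_lap_eq_mean_minus[OF assms(1)]
  by (auto intro!: tendsto_intros assms(2))

lemma odometer_tendsto_stable_odometer:
  assumes xi: "\<xi> > 0" and fin: "finite (A :: (int^'d) set)" and sA: "\<And>n. s n \<in> A"
    and inf: "\<forall>x\<in>A. \<exists>\<^sub>\<infinity>n. s n = x"
  obtains u where "stable_odometer \<xi> A \<tau> u" "\<And>y. (\<lambda>n. odometer \<xi> s \<tau> n y) \<longlonglongrightarrow> u y"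
proof -
  obtain v where super: "\<forall>y\<in>A. \<tau> y + scaled_lap \<xi> v y \<le> 0"
    and nonneg: "\<forall>y\<in>A. \<forall>y'. y' = y \<or> nbr \<xi> y' y \<longrightarrow> v y' \<ge> 0"
    using exists_nonneg_supersolution[OF xi fin] by blast
  define u where "u = (\<lambda>y. SUP n. odometer \<xi> s \<tau> n y)"
  have conv: "(\<lambda>n. odometer \<xi> s \<tau> n y) \<longlonglongrightarrow> u y" for y
    unfolding u_def
  proof (rule LIMSEQ_incseq_SUP[OF _ incseq_odometer])
    show "bdd_above (range (\<lambda>n. odometer \<xi> s \<tau> n y))"
    proof (cases "y \<in> A")
      case True
      thus ?thesis using odometer_le_supersolution[where s=s, OF xi sA super nonneg]
        by (intro bdd_aboveI2[of _ _ "v y"]) auto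
    next
      case False
      thus ?thesis using odometer_outside[where s=s, OF sA]
        by (intro bdd_aboveI2[of _ _ 0]) auto
    qed
  qed
  note topple_lim = topple_seq_tendsto[OF xi conv]
  have u_out: "u y = 0" if "y \<notin> A" for y
    using conv[of y] odometer_outside[where s=s, OF sA that] by (simp add: LIMSEQ_const_iff)
  text \<open>Right after each toppling at y the mass at y is nonpositive, and y is toppled
    infinitely often.\<close>
  have le0: "\<tau> y + scaled_lap \<xi> u y \<le> 0" if yA: "y \<in> A" for y
  proof (rule ccontr)
    assume "\<not> ?thesis"
    hence "\<forall>\<^sub>F n in sequentially. topple_seq \<xi> s (Suc n) \<tau> y > 0"
      using LIMSEQ_Suc[OF topple_lim] by (intro order_tendstoD(1)) auto
    then obtain N where N: "\<And>n. n \<ge> N \<Longrightarrow> topple_seq \<xi> s (Suc n) \<tau> y > 0"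
      unfolding eventually_sequentially by blast
    obtain n where "n > N" "s n = y"
      using inf yA unfolding INFM_nat by blast
    hence "topple_seq \<xi> s (Suc n) \<tau> y \<le> 0"
      using topple_at_site[OF xi, of y] by simp
    thus False using N[of n] \<open>n > N\<close> by simp
  qed
  have "stable_odometer \<xi> A \<tau> u"
    unfolding stable_odometer_def
  proof (intro conjI allI impI ballI le0 u_out)
    fix y
    show "u y \<ge> 0" by (rule LIMSEQ_le_const[OF conv]) (simp add: odometer_nonneg)
  next
    fix y assume "u y > 0"
    then obtain n0 where "odometer \<xi> s \<tau> n0 y > 0"
      using LIMSEQ_le_const2[OF conv[of y]] by (meson not_le)
    hence "\<forall>n\<ge>n0. topple_seq \<xi> s n \<tau> y \<ge> 0"
      using incseq_odometer[unfolded incseq_def] topple_seq_nonneg_if_toppled[OF xi]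
      by (meson order_less_le_trans)
    hence "\<tau> y + scaled_lap \<xi> u y \<ge> 0" by (intro LIMSEQ_le_const[OF topple_lim]) blast
    moreover have "y \<in> A" using u_out \<open>u y > 0\<close> by force
    ultimately show "\<tau> y + scaled_lap \<xi> u y = 0"
      using le0 by (simp add: order_antisym)
  qed
  thus thesis using that conv by blast
qed

lemma cyclic_enumeration:
  assumes "finite A" "A \<noteq> {}"
  obtains s :: "nat \<Rightarrow> 'a" where "\<And>n. s n \<in> A" "\<forall>x\<in>A. \<exists>\<^sub>\<infinity>n. s n = x"
proof -
  obtain xs where xs: "set xs = A" using finite_list[OF assms(1)] by blast
  define s where "s n = xs ! (n mod length xs)" for n
  have L: "length xs > 0" using xs assms(2) by auto
  have "\<exists>\<^sub>\<infinity>n. s n = x" if x: "x \<in> A" for x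
    unfolding INFM_nat
  proof
    fix m
    obtain k where k: "k < length xs" "xs ! k = x"
      using xs x by (auto simp: in_set_conv_nth)
    have "Suc m * 1 \<le> Suc m * length xs"
      using L by (intro mult_le_mono2) (simp add: Suc_le_eq)
    hence "m < k + Suc m * length xs" by simp
    moreover have "s (k + Suc m * length xs) = x"
      using k unfolding s_def mod_mult_self1 by simp
    ultimately show "\<exists>n>m. s n = x" by blast
  qed
  moreover have "s n \<in> A" for n
    using L xs unfolding s_def by (metis nth_mem mod_less_divisor)
  ultimately show thesis using that by blast
qed

lemma stable_odometer_exists:
  assumes "\<xi> > 0" "finite (A :: (int^'d) set)" "A \<noteq> {}"
  obtains u where "stable_odometer \<xi> A \<tau> u"
  using cyclic_enumeration[OF assms(2,3)] odometer_tendsto_stable_odometer[OF assms(1,2)] by metis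

lemma GDS_eq_stable_odometer:
  assumes xi: "\<xi> > 0" and R: "R > 0" and u: "stable_odometer \<xi> (Bhat \<xi> R) \<tau> u"
  shows "GDS \<xi> R \<tau> = (\<lambda>y. \<tau> y + scaled_lap \<xi> u (y::int^'d))"
proof -
  have fin: "finite (Bhat \<xi> R :: (int^'d) set)" by (rule finite_Bhat[OF xi])
  have lim: "(\<lambda>n. topple_seq \<xi> s n \<tau> y) \<longlonglongrightarrow> \<tau> y + scaled_lap \<xi> u y"
    if s: "admissible_seq \<xi> R s" for s y
  proof -
    obtain v where v: "stable_odometer \<xi> (Bhat \<xi> R) \<tau> v"
      and conv: "\<And>y. (\<lambda>n. odometer \<xi> s \<tau> n y) \<longlonglongrightarrow> v y"
      using odometer_tendsto_stable_odometer[OF xi fin, of s] s unfolding admissible_seq_def by blast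
    have "v = u" by (rule stable_odometer_unique[OF xi fin v u])
    thus ?thesis using topple_seq_tendsto[OF xi conv] by simp
  qed
  obtain s0 :: "nat \<Rightarrow> int^'d" where s0: "admissible_seq \<xi> R s0"
    using cyclic_enumeration[OF fin] zero_in_Bhat[OF R] unfolding admissible_seq_def by blast
  show ?thesis
    unfolding GDS_def
  proof (rule the_equality)
    fix \<omega> assume "\<forall>s. admissible_seq \<xi> R s \<longrightarrow> (\<forall>y. (\<lambda>n. topple_seq \<xi> s n \<tau> y) \<longlonglongrightarrow> \<omega> y)"
    thus "\<omega> = (\<lambda>y. \<tau> y + scaled_lap \<xi> u y)"
      using s0 lim[OF s0] by (blast intro: ext LIMSEQ_unique)
  qed (use lim in blast)
qed

theorem proposition3p9:
  fixes \<xi> R\<^sub>1 R\<^sub>2 :: real and \<sigma> :: "int^'d \<Rightarrow> real"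
  assumes "CARD('d) \<ge> 2"
    and "\<xi> > 0"
    and "gen_mass_config \<sigma>"
    and "R\<^sub>1 > 0"
    and "supp \<sigma> \<subseteq> Bhat \<xi> R\<^sub>1"
    and "R\<^sub>2 > R\<^sub>1 + \<xi>"
  shows "GDS \<xi> R\<^sub>2 (GDS \<xi> R\<^sub>1 \<sigma>) = GDS \<xi> R\<^sub>2 \<sigma>"
proof -
  note xi = \<open>\<xi> > 0\<close> and R\<^sub>1 = \<open>R\<^sub>1 > 0\<close>
  have R\<^sub>2: "R\<^sub>2 > 0" and sub: "Bhat \<xi> R\<^sub>1 \<subseteq> (Bhat \<xi> R\<^sub>2 :: (int^'d) set)"
    using assms(4,6) xi unfolding Bhat_def by auto
  have "finite (Bhat \<xi> R :: (int^'d) set)" "Bhat \<xi> R \<noteq> {}" if "R > 0" for R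
    using finite_Bhat[OF xi] zero_in_Bhat[OF that] by auto
  then obtain u\<^sub>1 u\<^sub>2 where u\<^sub>1: "stable_odometer \<xi> (Bhat \<xi> R\<^sub>1) \<sigma> u\<^sub>1"
    and u\<^sub>2: "stable_odometer \<xi> (Bhat \<xi> R\<^sub>2) (\<lambda>y. \<sigma> y + scaled_lap \<xi> u\<^sub>1 y) u\<^sub>2"
    using stable_odometer_exists[OF xi] R\<^sub>1 R\<^sub>2 by metis
  have "GDS \<xi> R\<^sub>2 (GDS \<xi> R\<^sub>1 \<sigma>) = (\<lambda>y. \<sigma> y + scaled_lap \<xi> u\<^sub>1 y + scaled_lap \<xi> u\<^sub>2 y)"
    using GDS_eq_stable_odometer[OF xi R\<^sub>1 u\<^sub>1] GDS_eq_stable_odometer[OF xi R\<^sub>2 u\<^sub>2] by simp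
  also have "\<dots> = GDS \<xi> R\<^sub>2 \<sigma>"
    using GDS_eq_stable_odometer[OF xi R\<^sub>2 stable_odometer_add[OF xi sub u\<^sub>1 u\<^sub>2]]
    by (simp add: scaled_lap_add add.assoc)
  finally show ?thesis .
qed

end
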